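(* For each $d$, let $X_0,X_1,\dots,X_n$ be i.i.d. $N(0,I_d)$, let $\varepsilon\sim N(0,I_d)$ be independent of them, and let $Y_0=X_0+\varepsilon$. Define the weights $$w_i=\frac{\exp(-\|Y_0-X_i\|^2/2)}{\sum_{j=1}^n\exp(-\|Y_0-X_j\|^2/2)},\quad i=1,\dots,n.$$ Let $h:\mathbb R^d\to\mathbb R$ be bounded (with a bound $M$ not depending on $d$), let $E^*h(X^* )=\sum_{j=1}^n w_jh(X_j)$, and let $E_1h(X)$ denote the expectation of $h(X)$ under the true posterior $p(X\mid Y_0)$ (which is $N(Y_0/2,\tfrac12 I_d)$). Then, if $\log n/d\to\infty$, $$|E^*h(X^* )-E_1h(X)|\xrightarrow{P}0.$$
   Context: $\|\cdot\|$ is the Euclidean norm. $E^*$ is the expectation of $h(X^* )$ when $X^*$ is drawn from the weighted empirical measure $\sum_{j}w_j\delta_{X_j}$. *)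

theory Defs
  imports "HOL-Probability.Probability"
begin

text \<open>Vectors in R^d are represented as functions nat => real, padded with 0 outside {..<d}.\<close>

definition pad :: "nat \<Rightarrow> (nat \<Rightarrow> real) \<Rightarrow> nat \<Rightarrow> real" where
  "pad d x = (\<lambda>k. if k < d then x k else 0)"

definition sqdist :: "nat \<Rightarrow> (nat \<Rightarrow> real) \<Rightarrow> (nat \<Rightarrow> real) \<Rightarrow> real" where
  "sqdist d x y = (\<Sum>k<d. (x k - y k)^2)"

text \<open>Joint sample space: coordinates (i,k) with i \<le> n, k < d, all i.i.d. N(0,1).
  Rows i = 0..n give X_0,...,X_n; row Suc n gives the noise epsilon.\<close>
definition sample_space :: "nat \<Rightarrow> nat \<Rightarrow> (nat \<times> nat \<Rightarrow> real) measure" where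
  "sample_space n d = PiM ({..Suc n} \<times> {..<d}) (\<lambda>_. density lborel std_normal_density)"

definition Xv :: "nat \<Rightarrow> nat \<Rightarrow> (nat \<times> nat \<Rightarrow> real) \<Rightarrow> nat \<Rightarrow> real" where
  "Xv d i \<omega> = pad d (\<lambda>k. \<omega> (i, k))"

definition Epsv :: "nat \<Rightarrow> nat \<Rightarrow> (nat \<times> nat \<Rightarrow> real) \<Rightarrow> nat \<Rightarrow> real" where
  "Epsv n d \<omega> = pad d (\<lambda>k. \<omega> (Suc n, k))"

definition Y0 :: "nat \<Rightarrow> nat \<Rightarrow> (nat \<times> nat \<Rightarrow> real) \<Rightarrow> nat \<Rightarrow> real" where
  "Y0 n d \<omega> = (\<lambda>k. Xv d 0 \<omega> k + Epsv n d \<omega> k)"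

definition weight :: "nat \<Rightarrow> nat \<Rightarrow> (nat \<Rightarrow> real) \<Rightarrow> (nat \<Rightarrow> nat \<Rightarrow> real) \<Rightarrow> nat \<Rightarrow> real" where
  "weight d n y X i = exp (- sqdist d y (X i) / 2) / (\<Sum>j\<in>{1..n}. exp (- sqdist d y (X j) / 2))"

definition wemp_exp :: "nat \<Rightarrow> nat \<Rightarrow> ((nat \<Rightarrow> real) \<Rightarrow> real) \<Rightarrow> (nat \<Rightarrow> real) \<Rightarrow> (nat \<Rightarrow> nat \<Rightarrow> real) \<Rightarrow> real" where
  "wemp_exp d n h y X = (\<Sum>j\<in>{1..n}. weight d n y X j * h (X j))"

definition posterior :: "nat \<Rightarrow> (nat \<Rightarrow> real) \<Rightarrow> (nat \<Rightarrow> real) measure" where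
  "posterior d y = PiM {..<d} (\<lambda>k. density lborel (normal_density (y k / 2) (sqrt (1/2))))"

definition post_exp :: "nat \<Rightarrow> ((nat \<Rightarrow> real) \<Rightarrow> real) \<Rightarrow> (nat \<Rightarrow> real) \<Rightarrow> real" where
  "post_exp d h y = (\<integral>x. h (pad d x) \<partial>posterior d y)"

end

theory Submission
  imports Defs
begin

text \<open>
  Given Y0 = y, the self-normalised estimator is the ratio of the two i.i.d. sums
  sum_j G(X_j) h(X_j) and sum_j G(X_j) with the likelihood G(x) = exp(-|y - x|^2/2).
  Completing the square shows that their means are n Z(y) E_1 h and n Z(y), where
  Z(y) = 2^(-d/2) exp(-|y|^2/4). By Hoeffding's inequality both sums are within relative error
  delta of their means, except with probability 4 exp(-n delta^2 Z(y)^2 / (2 (M+1)^2)), and then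
  the ratio is within 2 delta (1 + M) of E_1 h. By Markov's inequality |Y0|^2 <= t = O(d) off a
  set of small probability, and there Z(y)^2 >= exp(-t/2) / 2^d; since log n / d tends to
  infinity, the number n of proposals beats this exponentially small factor.
\<close>

section \<open>Product measures\<close>

lemma indicator_PiE_eq_prod:
  assumes "x \<in> extensional I" "finite I"
  shows "indicator (Pi\<^sub>E I A) x = (\<Prod>i\<in>I. indicator (A i) (x i) :: ennreal)"
proof (cases "x \<in> Pi\<^sub>E I A")
  case True
  then show ?thesis by (simp add: indicator_def PiE_iff)
next
  case False
  then obtain i where "i \<in> I" "x i \<notin> A i" using assms(1) by (auto simp: PiE_iff)
  then show ?thesis using False assms(2) by (simp add: indicator_def, blast)
qed

lemma PiM_density_lborel:
  fixes f :: "'i \<Rightarrow> real \<Rightarrow> real"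
  assumes fin: "finite I" and nonneg: "\<And>i x. 0 \<le> f i x"
    and meas: "\<And>i. f i \<in> borel_measurable borel"
    and prob: "\<And>i. prob_space (density lborel (f i))"
  shows "PiM I (\<lambda>i. density lborel (f i))
       = density (PiM I (\<lambda>_. lborel)) (\<lambda>x. \<Prod>i\<in>I. f i (x i))"
proof (rule product_sigma_finite.PiM_eqI[symmetric])
  show "product_sigma_finite (\<lambda>i. density lborel (f i))"
    unfolding product_sigma_finite_def using prob by (blast intro: prob_space_imp_sigma_finite)
  show "sets (density (PiM I (\<lambda>_. lborel)) (\<lambda>x. \<Prod>i\<in>I. f i (x i)))
      = sets (PiM I (\<lambda>i. density lborel (f i)))"
    by (simp only: sets_density) (rule sets_PiM_cong; simp)
  fix A assume "\<And>i. i \<in> I \<Longrightarrow> A i \<in> sets (density lborel (f i))"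
  then have A: "\<And>i. i \<in> I \<Longrightarrow> A i \<in> sets borel" by simp
  have lborel_product: "product_sigma_finite (\<lambda>_::'i. lborel::real measure)"
    unfolding product_sigma_finite_def by (blast intro: lborel.sigma_finite_measure_axioms)
  have "emeasure (density (PiM I (\<lambda>_. lborel)) (\<lambda>x. \<Prod>i\<in>I. f i (x i))) (Pi\<^sub>E I A)
      = (\<integral>\<^sup>+ x. ennreal (\<Prod>i\<in>I. f i (x i)) * indicator (Pi\<^sub>E I A) x \<partial>PiM I (\<lambda>_. lborel))"
    using A fin meas by (intro emeasure_density sets_PiM_I_finite) auto
  also have "\<dots> = (\<integral>\<^sup>+ x. (\<Prod>i\<in>I. ennreal (f i (x i)) * indicator (A i) (x i)) \<partial>PiM I (\<lambda>_. lborel))"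
  proof (intro nn_integral_cong)
    fix x assume "x \<in> space (PiM I (\<lambda>_. lborel::real measure))"
    then have "x \<in> extensional I" by (simp add: space_PiM PiE_iff)
    then show "ennreal (\<Prod>i\<in>I. f i (x i)) * indicator (Pi\<^sub>E I A) x
        = (\<Prod>i\<in>I. ennreal (f i (x i)) * indicator (A i) (x i))"
      using fin nonneg by (simp add: indicator_PiE_eq_prod prod_ennreal prod.distrib)
  qed
  also have "\<dots> = (\<Prod>i\<in>I. \<integral>\<^sup>+ x. ennreal (f i x) * indicator (A i) x \<partial>lborel)"
    using fin A meas by (intro product_sigma_finite.product_nn_integral_prod[OF lborel_product]) auto
  also have "\<dots> = (\<Prod>i\<in>I. emeasure (density lborel (f i)) (A i))"
    using A meas by (intro prod.cong refl) (simp add: emeasure_density)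
  finally show "emeasure (density (PiM I (\<lambda>_. lborel)) (\<lambda>x. \<Prod>i\<in>I. f i (x i))) (Pi\<^sub>E I A)
      = (\<Prod>i\<in>I. emeasure (density lborel (f i)) (A i))" .
qed fact

definition row :: "'k set \<Rightarrow> 'j \<Rightarrow> ('j \<times> 'k \<Rightarrow> 'a) \<Rightarrow> 'k \<Rightarrow> 'a" where
  "row K j \<omega> = (\<lambda>k\<in>K. \<omega> (j, k))"

lemma measurable_row:
  "j \<in> R \<Longrightarrow> row K j \<in> measurable (PiM (R \<times> K) (\<lambda>_. M)) (PiM K (\<lambda>_. M))"
  unfolding row_def by (intro measurable_restrict measurable_component_singleton) auto

lemma product_prob_space_const: "prob_space M \<Longrightarrow> product_prob_space (\<lambda>_. M)"
  by (intro product_prob_space.intro product_sigma_finite.intro product_prob_space_axioms.intro)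
     (auto intro: prob_space_imp_sigma_finite)

lemma distr_row:
  assumes "prob_space M" "finite R" "finite K" "j \<in> R"
  shows "distr (PiM (R \<times> K) (\<lambda>_. M)) (PiM K (\<lambda>_. M)) (row K j) = PiM K (\<lambda>_. M)"
  using product_prob_space.distr_reorder[OF product_prob_space_const[OF assms(1)],
      of "\<lambda>k. (j, k)" K "R \<times> K"] assms(2-)
  by (simp add: row_def[abs_def] inj_on_def Pi_iff)

lemma indep_vars_row:
  assumes M: "prob_space M" and fin: "finite R" "finite K" and ne: "R \<times> K \<noteq> {}"
  shows "prob_space.indep_vars (PiM (R \<times> K) (\<lambda>_. M)) (\<lambda>_. PiM K (\<lambda>_. M)) (row K) R"
proof -
  let ?P = "PiM (R \<times> K) (\<lambda>_. M)"
  interpret P: prob_space ?P using M by (rule prob_space_PiM)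
  have "distr ?P ?P (\<lambda>\<omega>. \<lambda>p\<in>R \<times> K. \<omega> p) = ?P"
    using product_prob_space.distr_PiM_restrict_finite[OF product_prob_space_const[OF M],
        of "R \<times> K" "R \<times> K"] fin
    by simp
  moreover have "PiM (R \<times> K) (\<lambda>p. distr ?P M (\<lambda>\<omega>. \<omega> p)) = ?P"
    using M by (intro PiM_cong refl distr_PiM_component)
  ultimately have "P.indep_vars (\<lambda>_. M) (\<lambda>p \<omega>. \<omega> p) (R \<times> K)"
    using ne by (subst P.indep_vars_iff_distr_eq_PiM') simp_all
  then have "P.indep_vars (\<lambda>j. PiM ({j} \<times> K) (\<lambda>_. M)) (\<lambda>j \<omega>. restrict \<omega> ({j} \<times> K)) R"
    by (rule P.indep_vars_restrict[where K="\<lambda>j. {j} \<times> K", simplified])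
       (auto simp: disjoint_family_on_def)
  then have "P.indep_vars (\<lambda>_. PiM K (\<lambda>_. M))
      (\<lambda>j \<omega>. (\<lambda>x. \<lambda>k\<in>K. x (j, k)) (restrict \<omega> ({j} \<times> K))) R"
    by (rule P.indep_vars_compose2) (intro measurable_restrict measurable_component_singleton, simp)
  moreover have "(\<lambda>j \<omega>. (\<lambda>x. \<lambda>k\<in>K. x (j, k)) (restrict \<omega> ({j} \<times> K))) = row K"
    by (auto simp: fun_eq_iff row_def)
  ultimately show ?thesis by metis
qed

lemma Hoeffding_row_mean:
  fixes F :: "('k \<Rightarrow> 'a) \<Rightarrow> real"
  assumes M: "prob_space M" and fin: "finite R" "finite K" and ne: "R \<noteq> {}" "K \<noteq> {}"
    and F: "F \<in> borel_measurable (PiM K (\<lambda>_. M))" and bounded: "\<And>x. \<bar>F x\<bar> \<le> C"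
    and C: "0 < C" and r: "0 \<le> r"
  shows "measure (PiM (R \<times> K) (\<lambda>_. M))
      {\<omega> \<in> space (PiM (R \<times> K) (\<lambda>_. M)).
        real (card R) * r \<le> \<bar>(\<Sum>j\<in>R. F (row K j \<omega>)) - real (card R) * (\<integral>x. F x \<partial>PiM K (\<lambda>_. M))\<bar>}
    \<le> 2 * exp (- (real (card R) * r^2) / (2 * C^2))"
proof -
  let ?P = "PiM (R \<times> K) (\<lambda>_. M)"
  interpret P: prob_space ?P using M by (rule prob_space_PiM)
  have indep: "P.indep_vars (\<lambda>_. borel) (\<lambda>j \<omega>. F (row K j \<omega>)) R"
    using ne by (intro P.indep_vars_compose2[OF indep_vars_row[OF M fin]] F) auto
  have "F x \<in> {-C..C}" for x using bounded[of x] by (simp add: abs_le_iff)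
  then have Hoeffding: "Hoeffding_ineq ?P R (\<lambda>j \<omega>. F (row K j \<omega>)) (\<lambda>_. -C) (\<lambda>_. C)"
    using fin indep
    unfolding Hoeffding_ineq_def indep_interval_bounded_random_variables_def
      indep_interval_bounded_random_variables_axioms_def
    by (auto intro: P.prob_space_axioms)
  have mean: "P.expectation (\<lambda>\<omega>. F (row K j \<omega>)) = (\<integral>x. F x \<partial>PiM K (\<lambda>_. M))" if "j \<in> R" for j
    using integral_distr[OF measurable_row[OF that] F] distr_row[OF M fin that] by simp
  then have sum_mean: "(\<Sum>j\<in>R. P.expectation (\<lambda>\<omega>. F (row K j \<omega>)))
      = real (card R) * (\<integral>x. F x \<partial>PiM K (\<lambda>_. M))"
    by simp
  have "card R > 0" using fin ne by (simp add: card_gt_0_iff)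
  then have exponent: "-2 * (real (card R) * r)^2 / (\<Sum>i\<in>R. (C - - C)^2)
      = - (real (card R) * r^2) / (2 * C^2)"
    using C by (simp add: power2_eq_square field_simps)
  have "(\<Sum>i\<in>R. (C - - C)^2) > 0" using fin ne C by (intro sum_pos) auto
  from Hoeffding_ineq.Hoeffding_ineq_abs_ge[OF Hoeffding _ this, of "real (card R) * r"] r
  show ?thesis unfolding sum_mean exponent by simp
qed

lemma sets_row_sum_deviation:
  fixes F :: "('k \<Rightarrow> 'a) \<Rightarrow> real"
  assumes "F \<in> borel_measurable (PiM K (\<lambda>_. M))"
  shows "{\<omega> \<in> space (PiM (R \<times> K) (\<lambda>_. M)). c \<le> \<bar>(\<Sum>j\<in>R. F (row K j \<omega>)) - a\<bar>}
    \<in> sets (PiM (R \<times> K) (\<lambda>_. M))"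
proof -
  have "(\<lambda>\<omega>. \<Sum>j\<in>R. F (row K j \<omega>)) \<in> borel_measurable (PiM (R \<times> K) (\<lambda>_. M))"
    by (rule borel_measurable_sum) (rule measurable_compose[OF measurable_row assms])
  then show ?thesis by measurable
qed

lemma emeasure_PiM_union_eq_nn_integral:
  fixes M :: "'i \<Rightarrow> 'a measure"
  assumes M: "product_sigma_finite M" and disj: "A \<inter> B = {}" and fin: "finite A" "finite B"
    and E: "E \<in> sets (PiM (A \<union> B) M)"
  shows "emeasure (PiM (A \<union> B) M) E
    = (\<integral>\<^sup>+ a. emeasure (PiM B M) {b \<in> space (PiM B M). merge A B (a, b) \<in> E} \<partial>PiM A M)"
proof -
  interpret PB: sigma_finite_measure "PiM B M"
    using M fin(2) by (rule product_sigma_finite.sigma_finite)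
  define E' where "E' = merge A B -` E \<inter> space (PiM A M \<Otimes>\<^sub>M PiM B M)"
  have E': "E' \<in> sets (PiM A M \<Otimes>\<^sub>M PiM B M)"
    unfolding E'_def by (rule measurable_sets[OF measurable_merge E])
  have "emeasure (PiM (A \<union> B) M) E = emeasure (PiM A M \<Otimes>\<^sub>M PiM B M) E'"
    unfolding E'_def
    by (subst (1) product_sigma_finite.distr_merge[OF M disj fin, symmetric])
       (rule emeasure_distr[OF measurable_merge E])
  also have "\<dots> = (\<integral>\<^sup>+ a. emeasure (PiM B M) (Pair a -` E') \<partial>PiM A M)"
    by (rule PB.emeasure_pair_measure_alt[OF E'])
  also have "\<dots> = (\<integral>\<^sup>+ a. emeasure (PiM B M) {b \<in> space (PiM B M). merge A B (a, b) \<in> E} \<partial>PiM A M)"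
    by (intro nn_integral_cong arg_cong[where f="emeasure (PiM B M)"])
       (auto simp: E'_def space_pair_measure)
  finally show ?thesis .
qed

lemma measure_PiM_union_le_slices:
  fixes M :: "'i \<Rightarrow> 'a measure"
  assumes M: "\<And>i. prob_space (M i)" and disj: "A \<inter> B = {}" and fin: "finite A" "finite B"
    and T: "T \<in> sets (PiM A M)" and \<beta>: "0 \<le> \<beta>"
    and slices: "\<And>a. a \<in> space (PiM A M) \<Longrightarrow> a \<notin> T \<Longrightarrow> \<exists>S \<in> sets (PiM B M).
        {b \<in> space (PiM B M). merge A B (a, b) \<in> E} \<subseteq> S \<and> measure (PiM B M) S \<le> \<beta>"
  shows "measure (PiM (A \<union> B) M) E \<le> measure (PiM A M) T + \<beta>"
proof (cases "E \<in> sets (PiM (A \<union> B) M)")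
  case False
  then show ?thesis using \<beta> by (simp add: measure_notin_sets)
next
  case E: True
  interpret PA: prob_space "PiM A M" using M by (rule prob_space_PiM)
  interpret PB: prob_space "PiM B M" using M by (rule prob_space_PiM)
  interpret P: prob_space "PiM (A \<union> B) M" using M by (rule prob_space_PiM)
  have "product_sigma_finite M"
    unfolding product_sigma_finite_def using M by (blast intro: prob_space_imp_sigma_finite)
  have slice_le: "emeasure (PiM B M) {b \<in> space (PiM B M). merge A B (a, b) \<in> E}
      \<le> indicator T a + ennreal \<beta>" if a: "a \<in> space (PiM A M)" for a
  proof (cases "a \<in> T")
    case True
    then show ?thesis using PB.emeasure_le_1 by (simp add: add_increasing2)
  next
    case False
    then obtain S where S: "S \<in> sets (PiM B M)" "measure (PiM B M) S \<le> \<beta>"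
      and slice: "{b \<in> space (PiM B M). merge A B (a, b) \<in> E} \<subseteq> S"
      using slices[OF a] by blast
    have "emeasure (PiM B M) {b \<in> space (PiM B M). merge A B (a, b) \<in> E} \<le> emeasure (PiM B M) S"
      using slice S(1) by (rule emeasure_mono)
    also have "\<dots> \<le> ennreal \<beta>"
      using S by (simp add: PB.emeasure_eq_measure ennreal_leI)
    finally show ?thesis by (simp add: add_increasing)
  qed
  have "emeasure (PiM (A \<union> B) M) E \<le> (\<integral>\<^sup>+ a. indicator T a + ennreal \<beta> \<partial>PiM A M)"
    unfolding emeasure_PiM_union_eq_nn_integral[OF \<open>product_sigma_finite M\<close> disj fin E]
    using slice_le by (rule nn_integral_mono)
  also have "\<dots> = emeasure (PiM A M) T + ennreal \<beta>"
    using T by (subst nn_integral_add) (auto simp: PA.emeasure_space_1)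
  finally show ?thesis
    using \<beta> by (simp add: P.emeasure_eq_measure PA.emeasure_eq_measure ennreal_plus[symmetric]
        del: ennreal_plus)
qed

section \<open>Gaussian likelihood and posterior\<close>

lemma std_normal_density_mult_likelihood:
  "std_normal_density x * exp (- ((y - x)^2) / 2)
     = exp (- (y^2) / 4) / sqrt 2 * normal_density (y / 2) (sqrt (1/2)) x"
proof -
  have square: "- (x^2 / 2) - (y - x)^2 / 2 = - (y^2 / 4) - (x - y / 2)^2"
    by (simp add: power2_eq_square field_simps)
  have "std_normal_density x * exp (- ((y - x)^2) / 2)
      = exp (- (y^2) / 4) * exp (- ((x - y / 2)^2)) / (sqrt 2 * sqrt pi)"
    unfolding std_normal_density_def by (simp add: real_sqrt_mult mult_exp_exp square)
  also have "\<dots> = exp (- (y^2) / 4) / sqrt 2 * normal_density (y / 2) (sqrt (1/2)) x"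
    by (simp add: normal_density_def)
  finally show ?thesis .
qed

lemma posterior_eq_density:
  "posterior d y = density (PiM {..<d} (\<lambda>_. lborel))
      (\<lambda>x. \<Prod>k<d. normal_density (y k / 2) (sqrt (1/2)) (x k))"
  unfolding posterior_def
  by (subst PiM_density_lborel) (auto intro: prob_space_normal_density)

lemma prob_space_posterior: "prob_space (posterior d y)"
  unfolding posterior_def by (intro prob_space_PiM prob_space_normal_density) simp

lemma sets_posterior: "sets (posterior d y) = sets (PiM {..<d} (\<lambda>_. borel))"
  unfolding posterior_def by (rule sets_PiM_cong) simp_all

lemma abs_post_exp_le:
  assumes meas: "(\<lambda>x. h (pad d x)) \<in> borel_measurable (PiM {..<d} (\<lambda>_. borel))"
    and bounded: "\<And>x. \<bar>h x\<bar> \<le> M"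
  shows "\<bar>post_exp d h y\<bar> \<le> M"
proof -
  interpret prob_space "posterior d y" by (rule prob_space_posterior)
  have int: "integrable (posterior d y) (\<lambda>x. h (pad d x))"
    using meas bounded by (intro integrable_const_bound[where B=M])
      (auto simp: measurable_cong_sets[OF sets_posterior refl])
  have lower: "- M \<le> h x" for x using bounded[of x] by linarith
  have "post_exp d h y \<le> M"
    unfolding post_exp_def by (rule integral_le_const[OF int]) (use bounded in \<open>auto simp: abs_le_iff\<close>)
  moreover have "- M \<le> post_exp d h y"
    unfolding post_exp_def using lower by (intro integral_ge_const[OF int] AE_I2)
  ultimately show ?thesis by linarith
qed

definition lik :: "nat \<Rightarrow> (nat \<Rightarrow> real) \<Rightarrow> (nat \<Rightarrow> real) \<Rightarrow> real" where
  "lik d y x = exp (- sqdist d y x / 2)"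

lemma lik_pos: "0 < lik d y x"
  by (simp add: lik_def)

lemma lik_le_1: "lik d y x \<le> 1"
  by (auto simp: lik_def sqdist_def intro: sum_nonneg)

lemma lik_pad: "lik d y (pad d x) = lik d y x"
  by (simp add: lik_def sqdist_def pad_def)

lemma sets_PiM_std_normal:
  "sets (PiM K (\<lambda>_. std_normal_distribution)) = sets (PiM K (\<lambda>_. borel))"
  by (rule sets_PiM_cong) simp_all

lemma abs_lik_mult_le: "\<bar>lik d y x * u\<bar> \<le> \<bar>u\<bar>"
  using lik_pos[of d y x] lik_le_1[of d y x] by (simp add: abs_mult mult_left_le_one_le)

lemma borel_measurable_lik: "lik d y \<in> borel_measurable (PiM {..<d} (\<lambda>_. std_normal_distribution))"
  unfolding lik_def[abs_def] sqdist_def measurable_cong_sets[OF sets_PiM_std_normal refl]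
  by measurable

definition lik_mean :: "nat \<Rightarrow> (nat \<Rightarrow> real) \<Rightarrow> real" where
  "lik_mean d y = (\<Prod>k<d. exp (- ((y k)^2) / 4) / sqrt 2)"

lemma lik_mean_pos: "0 < lik_mean d y"
  unfolding lik_mean_def by (intro prod_pos) auto

lemma lik_mean_sq: "(lik_mean d y)^2 = exp (- (\<Sum>k<d. (y k)^2) / 2) / 2^d"
proof -
  have factor: "(exp (- ((y k)^2) / 4) / sqrt 2)^2 = exp (- ((y k)^2) / 2) / 2" for k
    by (simp add: power_divide power2_eq_square mult_exp_exp)
  have "(lik_mean d y)^2 = (\<Prod>k<d. exp (- ((y k)^2) / 2) / 2)"
    unfolding lik_mean_def prod_power_distrib by (rule prod.cong[OF refl factor])
  also have "\<dots> = (\<Prod>k<d. exp (- ((y k)^2) / 2)) / 2^d"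
    by (simp add: prod_dividef)
  also have "(\<Prod>k<d. exp (- ((y k)^2) / 2)) = exp (- (\<Sum>k<d. (y k)^2) / 2)"
    by (simp add: exp_sum[symmetric] sum_negf sum_divide_distrib)
  finally show ?thesis .
qed

lemma lik_mean_sq_ge:
  "(\<Sum>k<d. (y k)^2) \<le> t \<Longrightarrow> exp (- t / 2) / 2^d \<le> (lik_mean d y)^2"
  unfolding lik_mean_sq by (intro divide_right_mono) auto

lemma integral_lik_mult:
  fixes H :: "(nat \<Rightarrow> real) \<Rightarrow> real"
  assumes H: "H \<in> borel_measurable (PiM {..<d} (\<lambda>_. borel))"
  shows "(\<integral>x. lik d y x * H x \<partial>PiM {..<d} (\<lambda>_. std_normal_distribution))
       = lik_mean d y * (\<integral>x. H x \<partial>posterior d y)"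
proof -
  let ?L = "PiM {..<d} (\<lambda>_. lborel::real measure)"
  let ?post = "\<lambda>x. \<Prod>k<d. normal_density (y k / 2) (sqrt (1/2)) (x k)"
  have sets_L: "sets ?L = sets (PiM {..<d} (\<lambda>_. borel))" by (rule sets_PiM_cong) simp_all
  have H_L: "H \<in> borel_measurable ?L"
    using H unfolding measurable_cong_sets[OF sets_L refl] .
  have prior: "PiM {..<d} (\<lambda>_. std_normal_distribution)
      = density ?L (\<lambda>x. \<Prod>k<d. std_normal_density (x k))"
    by (rule PiM_density_lborel) (auto intro: prob_space_normal_density)
  have factor: "(\<Prod>k<d. std_normal_density (x k)) * lik d y x = lik_mean d y * ?post x" for x
  proof -
    have "lik d y x = (\<Prod>k<d. exp (- ((y k - x k)^2) / 2))"
      by (simp add: lik_def sqdist_def exp_sum[symmetric] sum_negf sum_divide_distrib)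
    then have "(\<Prod>k<d. std_normal_density (x k)) * lik d y x
        = (\<Prod>k<d. std_normal_density (x k) * exp (- ((y k - x k)^2) / 2))"
      by (simp add: prod.distrib)
    also have "\<dots> = (\<Prod>k<d. exp (- ((y k)^2) / 4) / sqrt 2 * normal_density (y k / 2) (sqrt (1/2)) (x k))"
      by (simp only: std_normal_density_mult_likelihood)
    also have "\<dots> = lik_mean d y * ?post x"
      by (simp only: lik_mean_def prod.distrib)
    finally show ?thesis .
  qed
  have "(\<integral>x. lik d y x * H x \<partial>PiM {..<d} (\<lambda>_. std_normal_distribution))
      = (\<integral>x. (\<Prod>k<d. std_normal_density (x k)) * (lik d y x * H x) \<partial>?L)"
    unfolding prior using H_L
    by (subst integral_density) (auto simp: lik_def sqdist_def prod_nonneg)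
  also have "\<dots> = (\<integral>x. lik_mean d y * (?post x * H x) \<partial>?L)"
    by (simp only: mult.assoc[symmetric] factor)
  also have "\<dots> = lik_mean d y * (\<integral>x. ?post x * H x \<partial>?L)"
    by (rule integral_mult_right_zero)
  also have "(\<integral>x. ?post x * H x \<partial>?L) = (\<integral>x. H x \<partial>posterior d y)"
    unfolding posterior_eq_density using H_L
    by (subst integral_density) (auto simp: prod_nonneg)
  finally show ?thesis .
qed

corollary integral_lik:
  "(\<integral>x. lik d y x \<partial>PiM {..<d} (\<lambda>_. std_normal_distribution)) = lik_mean d y"
proof -
  interpret prob_space "posterior d y" by (rule prob_space_posterior)
  show ?thesis using integral_lik_mult[of "\<lambda>_. 1" d y] by (simp add: prob_space)
qed

section \<open>The estimator given the observation\<close>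

lemma abs_ratio_sub_le:
  fixes s t c \<delta> I M :: real
  assumes c: "0 < c" and \<delta>: "\<delta> \<le> 1/2" and I: "\<bar>I\<bar> \<le> M"
    and s: "\<bar>s - c * I\<bar> < c * \<delta>" and t: "\<bar>t - c\<bar> < c * \<delta>"
  shows "\<bar>s / t - I\<bar> \<le> 2 * \<delta> * (1 + M)"
proof -
  have "c * \<delta> \<le> c / 2" using c \<delta> by simp
  then have t_ge: "c / 2 < t" using t by linarith
  have "\<bar>s - I * t\<bar> \<le> \<bar>s - c * I\<bar> + \<bar>I\<bar> * \<bar>t - c\<bar>"
    by (simp add: abs_mult[symmetric] algebra_simps abs_triangle_ineq4 flip: abs_minus_commute)
  also have "\<dots> \<le> c * \<delta> + M * (c * \<delta>)"
    using s t I by (intro add_mono mult_mono) auto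
  finally have num: "\<bar>s - I * t\<bar> \<le> (1 + M) * (c * \<delta>)" by (simp add: algebra_simps)
  have "0 < c * \<delta>" using s abs_ge_zero[of "s - c * I"] by linarith
  moreover have "0 \<le> 1 + M" using I abs_ge_zero[of I] by linarith
  ultimately have "0 \<le> (1 + M) * (c * \<delta>)" by simp
  have "\<bar>s / t - I\<bar> = \<bar>s - I * t\<bar> / t"
    using t_ge c by (simp add: field_simps abs_div)
  also have "\<dots> \<le> (1 + M) * (c * \<delta>) / t"
    using num t_ge c by (intro divide_right_mono) auto
  also have "\<dots> \<le> (1 + M) * (c * \<delta>) / (c / 2)"
    using \<open>0 \<le> (1 + M) * (c * \<delta>)\<close> t_ge c by (intro divide_left_mono) auto
  also have "\<dots> = 2 * \<delta> * (1 + M)" using c by simp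
  finally show ?thesis .
qed

lemma wemp_exp_eq_ratio:
  "wemp_exp d n h y X = (\<Sum>j\<in>{1..n}. lik d y (X j) * h (X j)) / (\<Sum>j\<in>{1..n}. lik d y (X j))"
  unfolding wemp_exp_def weight_def lik_def by (simp add: sum_divide_distrib)

lemma wemp_exp_close:
  assumes "0 < c" "\<delta> \<le> 1/2" "\<bar>I\<bar> \<le> M"
    and "\<bar>(\<Sum>j\<in>{1..n}. lik d y (X j) * h (X j)) - c * I\<bar> < c * \<delta>"
    and "\<bar>(\<Sum>j\<in>{1..n}. lik d y (X j)) - c\<bar> < c * \<delta>"
  shows "\<bar>wemp_exp d n h y X - I\<bar> \<le> 2 * \<delta> * (1 + M)"
  unfolding wemp_exp_eq_ratio using assms by (rule abs_ratio_sub_le)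

lemma wemp_exp_cong:
  "(\<And>j. j \<in> {1..n} \<Longrightarrow> X j = X' j) \<Longrightarrow> wemp_exp d n h y X = wemp_exp d n h y X'"
  unfolding wemp_exp_eq_ratio by (intro arg_cong2[where f="(/)"] sum.cong refl) auto

lemma error_given_obs_covered:
  fixes h :: "(nat \<Rightarrow> real) \<Rightarrow> real"
  assumes n: "1 \<le> n" and d: "1 \<le> d"
    and meas: "(\<lambda>x. h (pad d x)) \<in> borel_measurable (PiM {..<d} (\<lambda>_. borel))"
    and bounded: "\<And>x. \<bar>h x\<bar> \<le> M"
    and \<delta>: "0 \<le> \<delta>" "\<delta> \<le> 1/2" "2 * \<delta> * (1 + M) < e"
  defines "P \<equiv> PiM ({1..n} \<times> {..<d}) (\<lambda>_. std_normal_distribution)"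
  shows "\<exists>S \<in> sets P.
      {b \<in> space P. e < \<bar>wemp_exp d n h y (\<lambda>j. pad d (row {..<d} j b)) - post_exp d h y\<bar>} \<subseteq> S
      \<and> measure P S \<le> 4 * exp (- (real n * (\<delta> * lik_mean d y)^2) / (2 * (M + 1)^2))"
proof -
  let ?Q = "PiM {..<d} (\<lambda>_. std_normal_distribution)"
  define H where "H x = h (pad d x)" for x
  define Z where "Z = lik_mean d y"
  define I where "I = post_exp d h y"
  define dev where "dev F = {b \<in> space P. real n * (\<delta> * Z)
      \<le> \<bar>(\<Sum>j\<in>{1..n}. F (row {..<d} j b)) - real n * (\<integral>x. F x \<partial>?Q)\<bar>}" for F
  define \<beta> where "\<beta> = 2 * exp (- (real n * (\<delta> * Z)^2) / (2 * (M + 1)^2))"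
  have "M \<ge> 0" using bounded[of undefined] by linarith
  have "0 < Z" by (simp add: Z_def lik_mean_pos)
  have H_meas: "H \<in> borel_measurable ?Q"
    using meas unfolding H_def[abs_def] measurable_cong_sets[OF sets_PiM_std_normal refl] .
  have lik_H_bounded: "\<bar>lik d y x * H x\<bar> \<le> M + 1" and lik_bounded: "\<bar>lik d y x\<bar> \<le> M + 1" for x
    using abs_lik_mult_le[of d y x "H x"] abs_lik_mult_le[of d y x 1] bounded[of "pad d x"] \<open>M \<ge> 0\<close>
    by (auto simp: H_def)
  have dev_le: "measure P (dev F) \<le> \<beta>"
    if "F \<in> borel_measurable ?Q" "\<And>x. \<bar>F x\<bar> \<le> M + 1" for F
    using Hoeffding_row_mean[OF prob_space_normal_density[of 1 0, simplified] _ _ _ _ that,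
        of "{1..n}" "\<delta> * Z"] n d \<open>M \<ge> 0\<close> \<open>0 \<le> \<delta>\<close> \<open>0 < Z\<close>
    by (simp add: P_def dev_def \<beta>_def lessThan_empty_iff)
  have dev_sets: "dev F \<in> sets P" if "F \<in> borel_measurable ?Q" for F
    unfolding dev_def P_def using that by (rule sets_row_sum_deviation)
  have "b \<in> dev (\<lambda>x. lik d y x * H x) \<union> dev (lik d y)"
    if b: "b \<in> space P" and bad: "e < \<bar>wemp_exp d n h y (\<lambda>j. pad d (row {..<d} j b)) - I\<bar>" for b
  proof (rule ccontr)
    assume "b \<notin> dev (\<lambda>x. lik d y x * H x) \<union> dev (lik d y)"
    then have "\<bar>wemp_exp d n h y (\<lambda>j. pad d (row {..<d} j b)) - I\<bar> \<le> 2 * \<delta> * (1 + M)"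
      using b n \<open>0 < Z\<close> abs_post_exp_le[OF meas bounded, of y] integral_lik_mult[OF meas] integral_lik
      by (intro wemp_exp_close[where c="real n * Z", OF _ \<delta>(2)])
         (auto simp: dev_def mult_ac lik_pad H_def Z_def I_def post_exp_def)
    then show False using bad \<delta>(3) by linarith
  qed
  moreover have "measure P (dev (\<lambda>x. lik d y x * H x) \<union> dev (lik d y)) \<le> \<beta> + \<beta>"
    using dev_sets dev_le borel_measurable_lik H_meas lik_H_bounded lik_bounded
    by (intro order_trans[OF measure_Un_le] add_mono) auto
  ultimately show ?thesis
    using dev_sets borel_measurable_lik H_meas lik_H_bounded lik_bounded
    by (intro bexI[of _ "dev (\<lambda>x. lik d y x * H x) \<union> dev (lik d y)"] conjI)
       (auto simp: \<beta>_def Z_def I_def)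
qed

section \<open>The error probability\<close>

lemma coordinate_sq_std_normal:
  assumes p: "p \<in> I"
  shows "integrable (PiM I (\<lambda>_. std_normal_distribution)) (\<lambda>\<omega>. (\<omega> p)^2)"
    and "(\<integral>\<omega>. (\<omega> p)^2 \<partial>PiM I (\<lambda>_. std_normal_distribution)) = 1"
proof -
  have coord: "(\<lambda>\<omega>. \<omega> p) \<in> measurable (PiM I (\<lambda>_. std_normal_distribution)) std_normal_distribution"
    using p by (rule measurable_component_singleton)
  have "distr (PiM I (\<lambda>_. std_normal_distribution)) std_normal_distribution (\<lambda>\<omega>. \<omega> p)
      = std_normal_distribution"
    using p by (intro distr_PiM_component) (auto intro: prob_space_normal_density[of 1 0, simplified])
  then show "integrable (PiM I (\<lambda>_. std_normal_distribution)) (\<lambda>\<omega>. (\<omega> p)^2)"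
    and "(\<integral>\<omega>. (\<omega> p)^2 \<partial>PiM I (\<lambda>_. std_normal_distribution)) = 1"
    using integrable_distr_eq[OF coord, of "\<lambda>x. x^2"] integral_distr[OF coord, of "\<lambda>x. x^2"]
      std_normal_distribution_even_moments[of 1]
    by (simp_all add: fact_numeral)
qed

lemma Y0_apply: "k < d \<Longrightarrow> Y0 n d \<omega> k = \<omega> (0, k) + \<omega> (Suc n, k)"
  by (simp add: Y0_def Xv_def Epsv_def pad_def)

lemma measure_sq_norm_Y0_gt_le:
  fixes n d :: nat
  assumes t: "0 < t"
  defines "P \<equiv> PiM ({0, Suc n} \<times> {..<d}) (\<lambda>_. std_normal_distribution)"
  shows "measure P {a \<in> space P. t < (\<Sum>k<d. (Y0 n d a k)^2)} \<le> 4 * real d / t"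
proof -
  interpret prob_space P unfolding P_def
    by (intro prob_space_PiM prob_space_normal_density[of 1 0, simplified])
  define U where "U a = (\<Sum>k<d. 2 * ((a (0, k))^2 + (a (Suc n, k))^2))" for a :: "nat \<times> nat \<Rightarrow> real"
  have Y0_le_U: "(\<Sum>k<d. (Y0 n d a k)^2) \<le> U a" for a
    unfolding U_def
  proof (intro sum_mono)
    fix k assume "k \<in> {..<d}"
    have "(u + v)^2 \<le> 2 * (u^2 + v^2)" for u v :: real
      using sum_squares_ge_zero[of "u - v" 0] by (simp add: power2_eq_square algebra_simps)
    then show "(Y0 n d a k)^2 \<le> 2 * ((a (0, k))^2 + (a (Suc n, k))^2)"
      using \<open>k \<in> {..<d}\<close> by (simp add: Y0_apply)
  qed
  have coords: "(0, k) \<in> {0, Suc n} \<times> {..<d}" "(Suc n, k) \<in> {0, Suc n} \<times> {..<d}"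
    if "k \<in> {..<d}" for k
    using that by auto
  have U_int: "integrable P U"
    unfolding U_def P_def using coords
    by (intro Bochner_Integration.integrable_sum Bochner_Integration.integrable_mult_right
        Bochner_Integration.integrable_add coordinate_sq_std_normal(1)) auto
  have "(\<integral>a. U a \<partial>P) = (\<Sum>k<d. 2 * (1 + 1))"
    unfolding U_def P_def using coords
    by (simp add: Bochner_Integration.integral_sum Bochner_Integration.integral_add
        Bochner_Integration.integrable_sum Bochner_Integration.integrable_mult_right
        Bochner_Integration.integrable_add coordinate_sq_std_normal)
  then have U_mean: "(\<integral>a. U a \<partial>P) = 4 * real d" by simp
  have U_nonneg: "AE a in P. 0 \<le> U a"
    by (intro AE_I2) (simp add: U_def sum_nonneg)
  have "measure P {a \<in> space P. t < (\<Sum>k<d. (Y0 n d a k)^2)} \<le> measure P {a \<in> space P. t \<le> U a}"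
    using Y0_le_U borel_measurable_integrable[OF U_int]
    by (intro finite_measure_mono) (auto intro: less_imp_le order.trans)
  also have "\<dots> \<le> (\<integral>a. U a \<partial>P) / t"
    by (rule integral_Markov_inequality_measure[OF U_int sets.top U_nonneg t])
  finally show ?thesis by (simp add: U_mean)
qed

lemma Y0_merge: "Y0 n d (merge ({0, Suc n} \<times> {..<d}) B (a, b)) = Y0 n d a"
  by (auto simp: fun_eq_iff Y0_def Xv_def Epsv_def pad_def merge_def)

lemma Xv_merge:
  "j \<in> {1..n} \<Longrightarrow> Xv d j (merge ({0, Suc n} \<times> {..<d}) ({1..n} \<times> {..<d}) (a, b))
     = pad d (row {..<d} j b)"
  by (auto simp: fun_eq_iff Xv_def pad_def merge_def row_def)

definition error_event :: "nat \<Rightarrow> nat \<Rightarrow> ((nat \<Rightarrow> real) \<Rightarrow> real) \<Rightarrow> real \<Rightarrow> (nat \<times> nat \<Rightarrow> real) set" where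
  "error_event n d h e = {\<omega> \<in> space (sample_space n d).
      e < \<bar>wemp_exp d n h (Y0 n d \<omega>) (\<lambda>i. Xv d i \<omega>) - post_exp d h (Y0 n d \<omega>)\<bar>}"

lemma error_event_slice_covered:
  fixes h :: "(nat \<Rightarrow> real) \<Rightarrow> real"
  assumes n: "1 \<le> n" and d: "1 \<le> d"
    and meas: "(\<lambda>x. h (pad d x)) \<in> borel_measurable (PiM {..<d} (\<lambda>_. borel))"
    and bounded: "\<And>x. \<bar>h x\<bar> \<le> M"
    and \<delta>: "0 \<le> \<delta>" "\<delta> \<le> 1/2" "2 * \<delta> * (1 + M) < e"
    and obs: "(\<Sum>k<d. (Y0 n d a k)^2) \<le> t"
  defines "A \<equiv> {0, Suc n} \<times> {..<d}" and "B \<equiv> {1..n} \<times> {..<d}"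
    and "P \<equiv> PiM ({1..n} \<times> {..<d}) (\<lambda>_. std_normal_distribution)"
  shows "\<exists>S \<in> sets P. {b \<in> space P. merge A B (a, b) \<in> error_event n d h e} \<subseteq> S
      \<and> measure P S \<le> 4 * exp (- (real n * \<delta>^2 * (exp (- t / 2) / 2^d)) / (2 * (M + 1)^2))"
proof -
  define y where "y = Y0 n d a"
  obtain S where S: "S \<in> sets P"
      "measure P S \<le> 4 * exp (- (real n * (\<delta> * lik_mean d y)^2) / (2 * (M + 1)^2))"
    and covered: "{b \<in> space P. e < \<bar>wemp_exp d n h y (\<lambda>j. pad d (row {..<d} j b)) - post_exp d h y\<bar>} \<subseteq> S"
    using error_given_obs_covered[OF n d meas bounded \<delta>] unfolding P_def by blast
  have "exp (- t / 2) / 2^d \<le> (lik_mean d y)^2"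
    using obs unfolding y_def by (rule lik_mean_sq_ge)
  then have "real n * \<delta>^2 * (exp (- t / 2) / 2^d) \<le> real n * (\<delta> * lik_mean d y)^2"
    unfolding power_mult_distrib mult.assoc by (intro mult_left_mono) auto
  then have "measure P S \<le> 4 * exp (- (real n * \<delta>^2 * (exp (- t / 2) / 2^d)) / (2 * (M + 1)^2))"
    using S(2) by (smt (verit) divide_right_mono exp_le_cancel_iff zero_le_power2)
  moreover have "{b \<in> space P. merge A B (a, b) \<in> error_event n d h e} \<subseteq> S"
  proof (rule subsetI)
    fix b assume "b \<in> {b \<in> space P. merge A B (a, b) \<in> error_event n d h e}"
    moreover have "wemp_exp d n h (Y0 n d (merge A B (a, b))) (\<lambda>i. Xv d i (merge A B (a, b)))
        = wemp_exp d n h y (\<lambda>j. pad d (row {..<d} j b))"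
      unfolding A_def B_def Y0_merge y_def by (rule wemp_exp_cong) (rule Xv_merge)
    ultimately show "b \<in> S"
      using covered by (auto simp: error_event_def A_def Y0_merge y_def)
  qed
  ultimately show ?thesis using S(1) by blast
qed

lemma measure_error_event_le:
  fixes h :: "(nat \<Rightarrow> real) \<Rightarrow> real"
  assumes n: "1 \<le> n" and d: "1 \<le> d" and t: "0 < t"
    and meas: "(\<lambda>x. h (pad d x)) \<in> borel_measurable (PiM {..<d} (\<lambda>_. borel))"
    and bounded: "\<And>x. \<bar>h x\<bar> \<le> M"
    and \<delta>: "0 \<le> \<delta>" "\<delta> \<le> 1/2" "2 * \<delta> * (1 + M) < e"
  shows "measure (sample_space n d) (error_event n d h e)
    \<le> 4 * real d / t + 4 * exp (- (real n * \<delta>^2 * (exp (- t / 2) / 2^d)) / (2 * (M + 1)^2))"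
proof -
  let ?A = "{0, Suc n} \<times> {..<d}" and ?B = "{1..n} \<times> {..<d}"
  let ?PA = "PiM ?A (\<lambda>_. std_normal_distribution)"
  define T where "T = {a \<in> space ?PA. t < (\<Sum>k<d. (Y0 n d a k)^2)}"
  have "M \<ge> 0" using bounded[of undefined] by linarith
  have "(\<lambda>a. \<Sum>k<d. (Y0 n d a k)^2) = (\<lambda>a. \<Sum>k<d. (a (0, k) + a (Suc n, k))^2)"
    by (simp add: Y0_apply)
  also have "\<dots> \<in> borel_measurable ?PA"
    by (intro borel_measurable_sum borel_measurable_power borel_measurable_add
        measurable_component_singleton) auto
  finally have "T \<in> sets ?PA"
    unfolding T_def by measurable
  have "sample_space n d = PiM (?A \<union> ?B) (\<lambda>_. std_normal_distribution)"
    unfolding sample_space_def by (rule arg_cong[where f="\<lambda>I. PiM I _"]) auto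
  moreover have "measure (PiM (?A \<union> ?B) (\<lambda>_. std_normal_distribution)) (error_event n d h e)
    \<le> measure ?PA T + 4 * exp (- (real n * \<delta>^2 * (exp (- t / 2) / 2^d)) / (2 * (M + 1)^2))"
    using \<open>T \<in> sets ?PA\<close> error_event_slice_covered[OF n d meas bounded \<delta>]
    by (intro measure_PiM_union_le_slices)
       (auto simp: T_def not_less prob_space_normal_density[of 1 0, simplified])
  moreover have "measure ?PA T \<le> 4 * real d / t"
    unfolding T_def by (rule measure_sq_norm_Y0_gt_le[OF t])
  ultimately show ?thesis by simp
qed

section \<open>Asymptotics\<close>

lemma filterlim_mult_exp_neg_at_top:
  fixes n :: "nat \<Rightarrow> nat"
  assumes growth: "filterlim (\<lambda>d. ln (real (n d)) / real d) at_top at_top"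
  shows "filterlim (\<lambda>d. real (n d) * exp (- a * real d)) at_top at_top"
proof -
  have "filterlim (\<lambda>d. real d * (- a + ln (real (n d)) / real d)) at_top at_top"
    by (intro filterlim_at_top_mult_at_top filterlim_real_sequentially
        filterlim_tendsto_add_at_top[OF tendsto_const growth])
  then have "filterlim (\<lambda>d. exp (real d * (- a + ln (real (n d)) / real d))) at_top at_top"
    by (rule filterlim_compose[OF exp_at_top])
  moreover have "\<forall>\<^sub>F d in at_top. exp (real d * (- a + ln (real (n d)) / real d))
      = real (n d) * exp (- a * real d)"
    using eventually_ge_at_top[of 1] growth[unfolded filterlim_at_top, rule_format, of 1]
  proof eventually_elim
    case (elim d)
    then have "0 < ln (real (n d))" by (simp add: field_simps)
    then have "0 < n d" by (cases "n d = 0") auto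
    have "real d * (- a + ln (real (n d)) / real d) = ln (real (n d)) + - a * real d"
      using elim by (simp add: field_simps)
    then show ?case
      using \<open>0 < n d\<close> by (simp add: exp_diff exp_minus field_simps)
  qed
  ultimately show ?thesis by (rule filterlim_cong[THEN iffD1, OF refl refl, rotated])
qed

lemma eventually_measure_error_event_less:
  fixes n :: "nat \<Rightarrow> nat" and h :: "nat \<Rightarrow> (nat \<Rightarrow> real) \<Rightarrow> real"
  assumes bounded: "\<And>d x. \<bar>h d x\<bar> \<le> M"
    and meas: "\<And>d. (\<lambda>x. h d (pad d x)) \<in> borel_measurable (PiM {..<d} (\<lambda>_. borel))"
    and growth: "filterlim (\<lambda>d. ln (real (n d)) / real d) at_top at_top"
    and \<delta>: "0 < \<delta>" "\<delta> \<le> 1/2" "2 * \<delta> * (1 + M) < e" and \<eta>: "0 < \<eta>"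
  shows "\<forall>\<^sub>F d in at_top. measure (sample_space (n d) d) (error_event (n d) d (h d) e) < \<eta>"
proof -
  define c where "c = \<delta>^2 / (2 * (M + 1)^2)"
  \<comment> \<open>With \<open>t = 8 d / \<eta>\<close> below, Markov's bound \<open>4 d / t\<close> is \<open>\<eta> / 2\<close> and \<open>exp (- t / 2) / 2^d = exp (- a d)\<close>.\<close>
  define a where "a = 4 / \<eta> + ln 2"
  have "M \<ge> 0" using bounded[of 0 undefined] by linarith
  then have "0 < c" using \<delta> by (simp add: c_def)
  have large: "filterlim (\<lambda>d. real (n d) * exp (- a * real d)) at_top at_top"
    by (rule filterlim_mult_exp_neg_at_top[OF growth])
  have "filterlim (\<lambda>d. - (c * (real (n d) * exp (- a * real d)))) at_bot at_top"
    unfolding filterlim_uminus_at_bot minus_minus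
    using \<open>0 < c\<close> by (intro filterlim_tendsto_pos_mult_at_top[OF tendsto_const _ large])
  then have "((\<lambda>d. exp (- (c * (real (n d) * exp (- a * real d))))) \<longlongrightarrow> 0) at_top"
    by (rule filterlim_compose[OF exp_at_bot])
  then have "((\<lambda>d. 4 * exp (- (c * (real (n d) * exp (- a * real d))))) \<longlongrightarrow> 0) at_top"
    by (rule tendsto_mult_right_zero)
  then have small: "\<forall>\<^sub>F d in at_top. 4 * exp (- (c * (real (n d) * exp (- a * real d)))) < \<eta> / 2"
    by (rule order_tendstoD(2)) (use \<eta> in simp)
  have "\<forall>\<^sub>F d in at_top. 1 \<le> n d"
    using large[unfolded filterlim_at_top, rule_format, of 1]
    by eventually_elim (rule ccontr, simp add: not_less_eq_eq)
  with small eventually_ge_at_top[of 1] show ?thesis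
  proof eventually_elim
    case (elim d)
    define t where "t = 8 * real d / \<eta>"
    have "0 < t" using elim \<eta> by (simp add: t_def)
    have "exp (- t / 2) / 2^d = exp (- t / 2 - real d * ln 2)"
      by (simp add: exp_diff exp_of_nat_mult)
    also have "\<dots> = exp (- a * real d)"
      using \<eta> by (simp add: a_def t_def field_simps)
    finally have "- (real (n d) * \<delta>^2 * (exp (- t / 2) / 2^d)) / (2 * (M + 1)^2)
        = - (c * (real (n d) * exp (- a * real d)))"
      by (simp add: c_def field_simps)
    moreover have "4 * real d / t = \<eta> / 2" using elim \<eta> by (simp add: t_def field_simps)
    ultimately show ?case
      using measure_error_event_le[OF elim(3,2) \<open>0 < t\<close> meas bounded less_imp_le[OF \<delta>(1)] \<delta>(2,3)]
        elim(1) by simp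
  qed
qed

theorem proposition4p1:
  fixes n :: "nat \<Rightarrow> nat" and h :: "nat \<Rightarrow> (nat \<Rightarrow> real) \<Rightarrow> real" and M :: real
  assumes bounded: "\<And>d x. \<bar>h d x\<bar> \<le> M"
    and meas: "\<And>d. (\<lambda>x. h d (pad d x)) \<in> borel_measurable (PiM {..<d} (\<lambda>_. borel))"
    and growth: "filterlim (\<lambda>d. ln (real (n d)) / real d) at_top at_top"
  shows "\<forall>e>0. ((\<lambda>d. measure (sample_space (n d) d)
            {\<omega> \<in> space (sample_space (n d) d).
               \<bar>wemp_exp d (n d) (h d) (Y0 (n d) d \<omega>) (\<lambda>i. Xv d i \<omega>)
                 - post_exp d (h d) (Y0 (n d) d \<omega>)\<bar> > e}) \<longlongrightarrow> 0) at_top"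
proof (intro allI impI)
  fix e :: real assume "0 < e"
  have "M \<ge> 0" using bounded[of 0 undefined] by linarith
  define \<delta> where "\<delta> = min (1/2) (e / (4 * (1 + M)))"
  have "0 < \<delta>" using \<open>0 < e\<close> \<open>M \<ge> 0\<close> by (simp add: \<delta>_def)
  have "2 * \<delta> * (1 + M) \<le> 2 * (e / (4 * (1 + M))) * (1 + M)"
    using \<open>M \<ge> 0\<close> by (intro mult_right_mono mult_left_mono) (simp_all add: \<delta>_def)
  also have "\<dots> = e / 2" using \<open>M \<ge> 0\<close> by (simp add: field_simps)
  finally have "2 * \<delta> * (1 + M) < e" using \<open>0 < e\<close> by linarith
  moreover have "\<delta> \<le> 1/2" unfolding \<delta>_def by (rule min.cobounded1)
  ultimately have \<delta>: "0 < \<delta>" "\<delta> \<le> 1/2" "2 * \<delta> * (1 + M) < e"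
    using \<open>0 < \<delta>\<close> by simp_all
  have "((\<lambda>d. measure (sample_space (n d) d) (error_event (n d) d (h d) e)) \<longlongrightarrow> 0) at_top"
  proof (rule order_tendstoI)
    show "\<forall>\<^sub>F d in at_top. a < measure (sample_space (n d) d) (error_event (n d) d (h d) e)"
      if "a < 0" for a
      using that by (simp add: less_le_trans[OF _ measure_nonneg])
    show "\<forall>\<^sub>F d in at_top. measure (sample_space (n d) d) (error_event (n d) d (h d) e) < \<eta>"
      if "0 < \<eta>" for \<eta>
      by (rule eventually_measure_error_event_less[OF bounded meas growth \<delta> that])
  qed
  then show "((\<lambda>d. measure (sample_space (n d) d)
            {\<omega> \<in> space (sample_space (n d) d).
               \<bar>wemp_exp d (n d) (h d) (Y0 (n d) d \<omega>) (\<lambda>i. Xv d i \<omega>)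
                 - post_exp d (h d) (Y0 (n d) d \<omega>)\<bar> > e}) \<longlongrightarrow> 0) at_top"
    by (simp add: error_event_def)
qed

end
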